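(* Let $d\ge 2$, $1\le s<q\le d$. Let $\mathbf{p}_1,\dots,\mathbf{p}_s\in\mathbb{R}^d$ be fixed orthonormal vectors and let $P^\perp$ denote the orthogonal projection onto the $(d-s)$-dimensional orthogonal complement of $\operatorname{span}\{\mathbf{p}_1,\dots,\mathbf{p}_s\}$. Let $\mathbf{r}_1,\dots,\mathbf{r}_{q-s}$ be independent standard Gaussian vectors in $\mathbb{R}^d$, and let $\mathbf{u}_1,\dots,\mathbf{u}_{q-s}$ be obtained by applying Gram–Schmidt orthogonalization to the ordered list $(\mathbf{p}_1,\dots,\mathbf{p}_s,\mathbf{r}_1,\dots,\mathbf{r}_{q-s})$ and keeping the last $q-s$ output vectors. Let $\mathbf{g}\in\mathbb{R}^d$ be fixed with $P^\perp\mathbf{g}\neq 0$, and set $\mathbf{v}:=\frac{1}{\sqrt{q-s}}\sum_{i=1}^{q-s}\operatorname{sign}(\mathbf{g}^\top\mathbf{u}_i)\,\mathbf{u}_i$. Then $$g_2:=\frac{d-s}{\frac{2}{\pi}(q-s-1)+1}\,(\mathbf{g}^\top\mathbf{v})\,\mathbf{v}+\sum_{i=1}^s(\mathbf{g}^\top\mathbf{p}_i)\,\mathbf{p}_i$$ satisfies $\mathbb{E}[g_2]=\mathbf{g}$.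
   Context: $\operatorname{sign}(a)=+1$ if $a>0$, $-1$ if $a<0$ (ties occur with probability zero). The Gram–Schmidt output is well defined almost surely. *)

theory Defs
  imports "HOL-Probability.Probability"
begin

fun gram_schmidt_aux :: "('a::real_inner) list \<Rightarrow> 'a list \<Rightarrow> 'a list" where
  "gram_schmidt_aux us [] = us"
| "gram_schmidt_aux us (x # xs) =
     (let w = x - sum_list (map (\<lambda>u. (x \<bullet> u) *\<^sub>R u) us)
      in gram_schmidt_aux (us @ [(1 / norm w) *\<^sub>R w]) xs)"

definition gram_schmidt :: "('a::real_inner) list \<Rightarrow> 'a list" where
  "gram_schmidt xs = gram_schmidt_aux [] xs"

definition std_gauss_vec :: "(real ^ 'n::finite) measure" where
  "std_gauss_vec = density lborel (\<lambda>x. ennreal (\<Prod>i\<in>UNIV. std_normal_density (x $ i)))"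

definition perp_proj :: "nat \<Rightarrow> (nat \<Rightarrow> real ^ 'n::finite) \<Rightarrow> real ^ 'n \<Rightarrow> real ^ 'n" where
  "perp_proj s p g = g - (\<Sum>i<s. (g \<bullet> p i) *\<^sub>R p i)"

end

(* Write k = q - s, u_1, ..., u_k for the last k Gram-Schmidt outputs and g0 = P^perp g.
   Householder reflections fixing p_1, ..., p_s preserve the law of the Gaussian sample and
   commute with Gram-Schmidt, so E[(g.v) v] is fixed by every such reflection that also fixes g.
   Being orthogonal to the p_i, it is therefore a multiple t g0, where
   t |g0|^2 = E (g0.v)^2 = M(g0) / k and M(w) = E (sum_i |w.u_i|)^2.
   By the same symmetry M(w) = c |w|^2 for all w orthogonal to the p_i. Substituting for w the
   projection P^perp x of an independent standard Gaussian x and exchanging the order of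
   integration gives c (d - s) = E_r E_x (sum_i |x.u_i|)^2 = k (1 + (k - 1) 2/pi), because the u_i
   are almost surely orthonormal, E (x.u)^2 = 1 and E |x.u| |x.u'| = 2/pi for orthonormal u, u'.
   Hence t = (1 + (k - 1) 2/pi) / (d - s), which the normalising constant cancels. *)

theory Submission
  imports Defs
begin

section \<open>Gram--Schmidt orthogonalization\<close>

lemma gram_schmidt_aux_append:
  "gram_schmidt_aux us (xs @ ys) = gram_schmidt_aux (gram_schmidt_aux us xs) ys"
  by (induction xs arbitrary: us) (simp_all add: Let_def)

lemma length_gram_schmidt_aux: "length (gram_schmidt_aux us xs) = length us + length xs"
  by (induction xs arbitrary: us) (simp_all add: Let_def)

lemma nth_gram_schmidt_aux_prefix: "j < length us \<Longrightarrow> gram_schmidt_aux us xs ! j = us ! j"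
  by (induction xs arbitrary: us) (simp_all add: Let_def nth_append)

lemma gram_schmidt_aux_Cons_nth:
  "gram_schmidt_aux us (x # xs) ! length us =
     (let w = x - (\<Sum>u\<leftarrow>us. (x \<bullet> u) *\<^sub>R u) in (1 / norm w) *\<^sub>R w)"
  using nth_gram_schmidt_aux_prefix[of "length us" "us @ [_]"] by (simp add: Let_def)

(* Since 1 / norm 0 = 0, Gram-Schmidt turns a vector lying in the span of its predecessors
   into the zero vector; its output is orthonormal only up to such zero vectors. *)
definition orthonormal_or_zero :: "'a::real_inner list \<Rightarrow> bool" where
  "orthonormal_or_zero us \<longleftrightarrow>
     (\<forall>i<length us. \<forall>j<length us. i \<noteq> j \<longrightarrow> us ! i \<bullet> us ! j = 0) \<and>
     (\<forall>i<length us. us ! i = 0 \<or> norm (us ! i) = 1)"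

lemma orthonormal_or_zero_Nil [simp]: "orthonormal_or_zero []"
  by (simp add: orthonormal_or_zero_def)

lemma orthonormal_or_zero_inner_self:
  "orthonormal_or_zero us \<Longrightarrow> i < length us \<Longrightarrow> us ! i \<bullet> us ! i = (if us ! i = 0 then 0 else 1)"
  unfolding orthonormal_or_zero_def by (metis inner_zero_left norm_eq_sqrt_inner real_sqrt_eq_1_iff)

lemma orthonormal_or_zero_residual:
  assumes "orthonormal_or_zero us" "j < length us"
  shows "(x - (\<Sum>u\<leftarrow>us. (x \<bullet> u) *\<^sub>R u)) \<bullet> us ! j = 0"
proof -
  have "(\<Sum>u\<leftarrow>us. (x \<bullet> u) *\<^sub>R u) \<bullet> us ! j = (\<Sum>i<length us. (x \<bullet> us ! i) * (us ! i \<bullet> us ! j))"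
    by (simp add: sum_list_sum_nth atLeast0LessThan inner_sum_left)
  also have "\<dots> = (x \<bullet> us ! j) * (us ! j \<bullet> us ! j)"
    using assms unfolding orthonormal_or_zero_def
    by (subst sum.remove[of _ j]) (auto intro!: sum.neutral)
  also have "\<dots> = x \<bullet> us ! j"
    using orthonormal_or_zero_inner_self[OF assms] by auto
  finally show ?thesis by (simp add: inner_diff_left)
qed

lemma orthonormal_or_zero_snoc_normalized:
  assumes "orthonormal_or_zero us" "\<And>j. j < length us \<Longrightarrow> w \<bullet> us ! j = 0"
  shows "orthonormal_or_zero (us @ [(1 / norm w) *\<^sub>R w])"
proof -
  have "norm ((1 / norm w) *\<^sub>R w) = 1" if "w \<noteq> 0" using that by simp
  then show ?thesis
    using assms unfolding orthonormal_or_zero_def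
    by (auto simp: nth_append less_Suc_eq inner_commute)
qed

lemma orthonormal_or_zero_gram_schmidt_aux:
  "orthonormal_or_zero us \<Longrightarrow> orthonormal_or_zero (gram_schmidt_aux us xs)"
  by (induction xs arbitrary: us)
    (simp_all add: Let_def orthonormal_or_zero_snoc_normalized orthonormal_or_zero_residual)

lemma orthonormal_or_zero_gram_schmidt: "orthonormal_or_zero (gram_schmidt xs)"
  by (simp add: gram_schmidt_def orthonormal_or_zero_gram_schmidt_aux)

lemma gram_schmidt_orthonormal:
  assumes "\<forall>i<s. \<forall>j<s. p i \<bullet> p j = (if i = j then 1 else 0)"
  shows "gram_schmidt (map p [0..<s]) = map p [0..<s]"
  using assms
proof (induction s)
  case (Suc s)
  have "p s - (\<Sum>u\<leftarrow>map p [0..<s]. (p s \<bullet> u) *\<^sub>R u) = p s"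
    using Suc.prems by (auto simp: sum_list_sum_nth atLeast0LessThan intro!: sum.neutral)
  moreover have "norm (p s) = 1"
    using Suc.prems by (simp add: norm_eq_sqrt_inner)
  ultimately show ?case
    using Suc by (simp add: gram_schmidt_def gram_schmidt_aux_append Let_def)
qed (simp add: gram_schmidt_def)

lemma gram_schmidt_aux_map_isometry:
  assumes "linear f" "\<And>x y. f x \<bullet> f y = x \<bullet> y"
  shows "gram_schmidt_aux (map f us) (map f xs) = map f (gram_schmidt_aux us xs)"
proof (induction xs arbitrary: us)
  case (Cons x xs)
  define w where "w = x - (\<Sum>u\<leftarrow>us. (x \<bullet> u) *\<^sub>R u)"
  have "f x - (\<Sum>u\<leftarrow>map f us. (f x \<bullet> u) *\<^sub>R u) = f w"
    by (simp add: w_def sum_list_sum_nth atLeast0LessThan assms(2) linear_diff[OF assms(1)]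
        linear_sum[OF assms(1)] linear_scale[OF assms(1)])
  moreover have "norm (f w) = norm w"
    by (simp add: norm_eq_sqrt_inner assms(2))
  ultimately show ?case
    using Cons[of "us @ [(1 / norm w) *\<^sub>R w]"]
    by (simp add: Let_def w_def[symmetric] linear_scale[OF assms(1)])
qed simp

lemma gram_schmidt_aux_nth_zero_in_span:
  assumes "gram_schmidt_aux us (x # xs) ! length us = 0"
  shows "x \<in> span (set us)"
proof -
  define w where "w = x - (\<Sum>u\<leftarrow>us. (x \<bullet> u) *\<^sub>R u)"
  have "(1 / norm w) *\<^sub>R w = 0"
    using assms by (simp only: gram_schmidt_aux_Cons_nth w_def Let_def)
  then have "x = (\<Sum>u\<leftarrow>us. (x \<bullet> u) *\<^sub>R u)"
    by (cases "w = 0") (auto simp: w_def)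
  also have "\<dots> \<in> span (set us)"
    by (auto simp: sum_list_sum_nth atLeast0LessThan span_base intro!: span_sum span_scale)
  finally show ?thesis .
qed

lemma measurable_gram_schmidt_aux_nth:
  fixes us :: "'b \<Rightarrow> 'a::euclidean_space list"
  assumes "\<And>j. (\<lambda>r. us r ! j) \<in> borel_measurable M" "\<And>r. length (us r) = c"
    and "\<And>f. f \<in> set fs \<Longrightarrow> f \<in> borel_measurable M"
  shows "(\<lambda>r. gram_schmidt_aux (us r) (map (\<lambda>f. f r) fs) ! j) \<in> borel_measurable M"
  using assms
proof (induction fs arbitrary: us c)
  case (Cons f fs)
  define e where
    "e r = (let w = f r - (\<Sum>l<c. (f r \<bullet> us r ! l) *\<^sub>R us r ! l) in (1 / norm w) *\<^sub>R w)" for r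
  have [measurable]: "f \<in> borel_measurable M" "\<And>j. (\<lambda>r. us r ! j) \<in> borel_measurable M"
    using Cons.prems by simp_all
  have [measurable]: "e \<in> borel_measurable M"
    unfolding e_def Let_def by measurable
  have "(\<lambda>r. (us r @ [e r]) ! j) \<in> borel_measurable M" for j
  proof -
    have "(us r @ [e r]) ! j =
        (if j < c then us r ! j else if j = c then e r else [] ! (j - Suc c))" for r
      using Cons.prems(2) by (auto simp: nth_append)
    then show ?thesis by simp
  qed
  moreover have "gram_schmidt_aux (us r) (map (\<lambda>f. f r) (f # fs)) =
      gram_schmidt_aux (us r @ [e r]) (map (\<lambda>f. f r) fs)" for r
    using Cons.prems(2) by (simp add: Let_def e_def sum_list_sum_nth atLeast0LessThan)
  ultimately show ?case
    using Cons.IH[of _ "Suc c"] Cons.prems by auto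
qed simp

section \<open>Householder reflections\<close>

definition householder :: "'a::real_inner \<Rightarrow> 'a \<Rightarrow> 'a" where
  "householder a x = x - (2 * (a \<bullet> x) / (a \<bullet> a)) *\<^sub>R a"

lemma linear_householder: "linear (householder a)"
  by (auto intro!: linearI simp: householder_def inner_add_right add_divide_distrib algebra_simps)

lemma householder_adjoint: "householder a x \<bullet> y = x \<bullet> householder a y"
  by (simp add: householder_def inner_diff_left inner_diff_right algebra_simps inner_commute)

lemma householder_householder [simp]: "householder a (householder a x) = x"
  by (cases "a = 0") (simp_all add: householder_def inner_diff_right algebra_simps)

lemma inner_householder [simp]: "householder a x \<bullet> householder a y = x \<bullet> y"
  by (simp add: householder_adjoint)

lemma orthogonal_transformation_householder: "orthogonal_transformation (householder a)"
  by (simp add: orthogonal_transformation_def linear_householder)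

lemma householder_fixes_orthogonal: "a \<bullet> v = 0 \<Longrightarrow> householder a v = v"
  by (simp add: householder_def)

lemma householder_swap:
  assumes "norm w = norm v"
  shows "householder (w - v) v = w"
proof -
  have "(w - v) \<bullet> (w - v) = w \<bullet> w - v \<bullet> v - 2 * ((w - v) \<bullet> v)"
    by (simp add: inner_diff_left inner_diff_right inner_commute)
  also have "w \<bullet> w = v \<bullet> v"
    using assms by (simp add: dot_square_norm)
  finally show ?thesis
    by (cases "(w - v) \<bullet> v = 0") (simp_all add: householder_def)
qed

lemma orthonormal_pair_to_axes:
  fixes u v :: "real^'n::finite"
  assumes "norm u = 1" "norm v = 1" "u \<bullet> v = 0"
  obtains f :: "real^'n \<Rightarrow> real^'n" and i j :: 'n
  where "orthogonal_transformation f" "i \<noteq> j" "f u = axis i 1" "f v = axis j 1"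
proof -
  obtain i :: 'n where True by simp
  define H1 where "H1 = householder (axis i 1 - u)"
  have H1u: "H1 u = axis i 1"
    unfolding H1_def by (rule householder_swap) (simp add: assms)
  define v' where "v' = H1 v"
  have "norm v' = 1"
    using assms(2) inner_householder[of "axis i 1 - u" v v]
    by (simp add: v'_def H1_def norm_eq_sqrt_inner)
  have "v' $ i = 0"
    using inner_householder[of "axis i 1 - u" v u] assms(3)
    by (simp add: v'_def H1_def[symmetric] H1u inner_axis inner_commute)
  obtain j where "v' $ j \<noteq> 0"
    using \<open>norm v' = 1\<close> by (metis norm_zero vec_eq_iff zero_index zero_neq_one)
  with \<open>v' $ i = 0\<close> have "i \<noteq> j" by auto
  define H2 where "H2 = householder (axis j 1 - v')"
  have H2v': "H2 v' = axis j 1"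
    unfolding H2_def by (rule householder_swap) (simp add: \<open>norm v' = 1\<close>)
  have H2i: "H2 (axis i 1) = axis i 1"
    unfolding H2_def using \<open>v' $ i = 0\<close> \<open>i \<noteq> j\<close>
    by (intro householder_fixes_orthogonal) (simp add: inner_diff_left inner_axis, simp add: axis_def)
  show ?thesis
  proof (rule that[of "H2 \<circ> H1" i j])
    show "orthogonal_transformation (H2 \<circ> H1)"
      by (simp add: H1_def H2_def orthogonal_transformation_compose orthogonal_transformation_householder)
  qed (simp_all add: \<open>i \<noteq> j\<close> H1u H2i H2v' v'_def[symmetric])
qed

lemma borel_measurable_linear:
  "linear (f :: 'a::euclidean_space \<Rightarrow> 'b::euclidean_space) \<Longrightarrow> f \<in> borel_measurable borel"
  by (intro borel_measurable_continuous_onI linear_continuous_on linear_conv_bounded_linear[THEN iffD1])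

lemma borel_measurable_householder [measurable]:
  "householder (a :: 'a::euclidean_space) \<in> borel_measurable borel"
  by (rule borel_measurable_linear[OF linear_householder])

section \<open>Orthogonal maps preserve Lebesgue measure\<close>

(* The library proves this (measure_orthogonal_image) only on real^'m for index types 'm of class
   wellorder; ordered_index is a wellordered copy of an arbitrary finite index type. *)
typedef ('a::finite) ordered_index = "{..<CARD('a)}"
  morphisms index_rank index_of_rank
  by (rule exI[of _ 0]) simp

instantiation ordered_index :: (finite) linorder
begin
definition "x \<le> y \<longleftrightarrow> index_rank x \<le> index_rank y"
definition "x < y \<longleftrightarrow> index_rank x < index_rank y"
instance by standard (auto simp: less_eq_ordered_index_def less_ordered_index_def index_rank_inject)
end

lemma UNIV_ordered_index: "(UNIV :: 'a::finite ordered_index set) = index_of_rank ` {..<CARD('a)}"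
  by (rule type_definition.univ[OF type_definition_ordered_index])

instance ordered_index :: (finite) finite
  by standard (simp add: UNIV_ordered_index)

instance ordered_index :: (finite) wellorder
proof
  fix P :: "'a ordered_index \<Rightarrow> bool" and a
  assume step: "\<And>x. (\<And>y. y < x \<Longrightarrow> P y) \<Longrightarrow> P x"
  have "\<forall>x. index_rank x = n \<longrightarrow> P x" for n
    by (induction n rule: less_induct) (metis less_ordered_index_def step)
  then show "P a" by blast
qed

lemma card_ordered_index: "CARD('a::finite ordered_index) = CARD('a)"
proof -
  have "inj_on (index_of_rank :: nat \<Rightarrow> 'a ordered_index) {..<CARD('a)}"
    by (metis inj_onI type_definition.Abs_inject[OF type_definition_ordered_index])
  then show ?thesis by (simp add: UNIV_ordered_index card_image)
qed

lemma lborel_distr_orthogonal_wellorder: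
  fixes f :: "real^'m::{finite,wellorder} \<Rightarrow> real^'m::_"
  assumes f: "orthogonal_transformation f"
  shows "distr lborel borel f = lborel"
proof (rule lborel_eqI[symmetric])
  fix l u :: "(real, 'm) vec"
  assume le: "\<And>b. b \<in> Basis \<Longrightarrow> l \<bullet> b \<le> u \<bullet> b"
  have [measurable]: "f \<in> borel_measurable borel"
    using f by (simp add: borel_measurable_linear orthogonal_transformation_linear)
  have g: "orthogonal_transformation (inv f)"
    using f by (rule orthogonal_transformation_inv)
  have pre: "f -` box l u = inv f ` box l u"
    using orthogonal_transformation_bij[OF f] by (simp add: bij_vimage_eq_inv_image)
  have box: "box l u \<in> lmeasurable" by simp
  have "f -` box l u \<in> sets borel"
    by (simp add: measurable_sets_borel[OF \<open>f \<in> borel_measurable borel\<close>])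
  then have "emeasure (distr lborel borel f) (box l u) = emeasure lebesgue (inv f ` box l u)"
    by (simp add: emeasure_distr pre[symmetric])
  also have "\<dots> = measure lebesgue (box l u)"
    by (simp add: emeasure_eq_measure2 measurable_orthogonal_image[OF g box]
        measure_orthogonal_image[OF g box])
  also have "\<dots> = emeasure lborel (box l u)"
    by (simp add: emeasure_eq_measure2)
  finally show "emeasure (distr lborel borel f) (box l u) = (\<Prod>b\<in>Basis. (u - l) \<bullet> b)"
    using le by (simp add: emeasure_lborel_box_eq)
qed simp

lemma prod_Basis_vec: "(\<Prod>b\<in>(Basis :: (real^'n::finite) set). G b) = (\<Prod>i\<in>UNIV. G (axis i 1))"
proof -
  have "inj (\<lambda>i::'n. axis i (1::real))"
    by (auto intro!: injI simp: axis_eq_axis)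
  then show ?thesis
    by (simp add: Basis_vec_def UNION_singleton_eq_range prod.reindex)
qed

lemma lborel_distr_permute_coordinates:
  fixes \<sigma> :: "'m::finite \<Rightarrow> 'n::finite"
  assumes "bij \<sigma>"
  shows "distr lborel borel (\<lambda>x::real^'n. \<chi> j. x $ \<sigma> j) = (lborel :: (real^'m) measure)"
proof (rule lborel_eqI[symmetric])
  let ?\<Phi> = "\<lambda>x::real^'n. \<chi> j. x $ \<sigma> j"
  have [measurable]: "?\<Phi> \<in> borel_measurable borel"
    by (intro borel_measurable_linear linearI) (auto simp: vec_eq_iff)
  fix l u :: "real^'m"
  assume le_Basis: "\<And>b. b \<in> Basis \<Longrightarrow> l \<bullet> b \<le> u \<bullet> b"
  have le: "l $ i \<le> u $ i" for i
    using le_Basis[of "axis i 1"] by (auto simp: Basis_vec_def inner_axis)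
  let ?l = "\<chi> i. l $ inv \<sigma> i" and ?u = "\<chi> i. u $ inv \<sigma> i"
  have "?\<Phi> -` box l u = box ?l ?u"
    using assms by (auto simp: mem_box_cart bij_inv_eq_iff) (metis bij_inv_eq_iff)+
  moreover have "(\<Prod>i\<in>UNIV. u $ inv \<sigma> i - l $ inv \<sigma> i) = (\<Prod>i\<in>UNIV. u $ i - l $ i)"
    using assms prod.reindex_bij_betw[of "inv \<sigma>" UNIV UNIV "\<lambda>i. u $ i - l $ i"]
    by (simp add: bij_betw_inv_into bij_imp_bij_inv)
  moreover have "\<forall>b\<in>Basis. ?l \<bullet> b \<le> ?u \<bullet> b"
    using le by (auto simp: Basis_vec_def inner_axis)
  ultimately show "emeasure (distr lborel borel ?\<Phi>) (box l u) = (\<Prod>b\<in>Basis. (u - l) \<bullet> b)"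
    using le by (simp add: emeasure_distr emeasure_lborel_box_eq prod_Basis_vec inner_axis
        mem_box_cart box_ne_empty)
qed simp

lemma orthogonal_transformation_permute_coordinates:
  fixes \<sigma> :: "'m::finite \<Rightarrow> 'n::finite"
  assumes "bij \<sigma>"
  shows "orthogonal_transformation (\<lambda>x::real^'n. \<chi> j. x $ \<sigma> j)"
proof -
  have "norm (\<chi> j. x $ \<sigma> j) = norm x" for x :: "real^'n"
    using assms sum.reindex_bij_betw[of \<sigma> UNIV UNIV "\<lambda>i. (x $ i)\<^sup>2"]
    by (simp add: norm_vec_def L2_set_def)
  moreover have "linear (\<lambda>x::real^'n. \<chi> j. x $ \<sigma> j)"
    by (auto intro!: linearI simp: vec_eq_iff)
  ultimately show ?thesis
    by (simp add: orthogonal_transformation)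
qed

lemma lborel_distr_orthogonal:
  fixes f :: "real^'n::finite \<Rightarrow> real^'n"
  assumes f: "orthogonal_transformation f"
  shows "distr lborel borel f = lborel"
proof -
  obtain \<sigma> :: "'n ordered_index \<Rightarrow> 'n" where "bij_betw \<sigma> UNIV UNIV"
    using finite_same_card_bij[of "UNIV :: 'n ordered_index set" "UNIV :: 'n set"]
    by (auto simp: card_ordered_index)
  then have \<sigma>: "bij \<sigma>" "bij (inv \<sigma>)"
    by (simp_all add: bij_imp_bij_inv)
  define \<Phi> where "\<Phi> x = (\<chi> j. x $ \<sigma> j)" for x :: "real^'n"
  define \<Psi> where "\<Psi> y = (\<chi> i. y $ inv \<sigma> i)" for y :: "real^'n ordered_index"
  have \<Psi>\<Phi>: "\<Psi> (\<Phi> x) = x" for x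
    using \<sigma> by (simp add: \<Phi>_def \<Psi>_def vec_eq_iff bij_is_surj surj_f_inv_f)
  have "orthogonal_transformation \<Phi>" "orthogonal_transformation \<Psi>"
    unfolding \<Phi>_def[abs_def] \<Psi>_def[abs_def]
    using \<sigma> by (simp_all add: orthogonal_transformation_permute_coordinates)
  then have orth: "orthogonal_transformation (\<Phi> \<circ> f \<circ> \<Psi>)"
    using f by (simp add: orthogonal_transformation_compose)
  have [measurable]:
      "\<Phi> \<in> borel_measurable borel" "\<Psi> \<in> borel_measurable borel" "f \<in> borel_measurable borel"
    using \<open>orthogonal_transformation \<Phi>\<close> \<open>orthogonal_transformation \<Psi>\<close> f
    by (simp_all add: borel_measurable_linear orthogonal_transformation_linear)
  have lborel_\<Psi>: "distr lborel borel \<Psi> = lborel"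
    unfolding \<Psi>_def by (rule lborel_distr_permute_coordinates[OF \<sigma>(2)])
  have "distr lborel borel f = distr lborel borel (f \<circ> \<Psi>)"
    by (subst lborel_\<Psi>[symmetric]) (simp add: distr_distr)
  also have "f \<circ> \<Psi> = \<Psi> \<circ> (\<Phi> \<circ> f \<circ> \<Psi>)"
    by (simp add: fun_eq_iff \<Psi>\<Phi>)
  also have "distr lborel borel (\<Psi> \<circ> (\<Phi> \<circ> f \<circ> \<Psi>)) = distr (distr lborel borel (\<Phi> \<circ> f \<circ> \<Psi>)) borel \<Psi>"
    by (simp add: distr_distr)
  also have "\<dots> = lborel"
    by (simp add: lborel_distr_orthogonal_wellorder[OF orth] lborel_\<Psi>)
  finally show ?thesis .
qed

section \<open>The standard Gaussian vector\<close>

lemma nn_integral_lborel_prod_vec: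
  fixes h :: "'n::finite \<Rightarrow> real \<Rightarrow> real"
  assumes [measurable]: "\<And>i. h i \<in> borel_measurable borel" and nonneg: "\<And>i t. 0 \<le> h i t"
  shows "(\<integral>\<^sup>+x. ennreal (\<Prod>i\<in>UNIV. h i (x $ i)) \<partial>(lborel :: (real^'n) measure))
     = (\<Prod>i\<in>UNIV. \<integral>\<^sup>+t. ennreal (h i t) \<partial>lborel)"
proof -
  define idx where "idx b = (SOME i::'n. b = axis i (1::real))" for b :: "real^'n"
  have idx: "idx (axis i 1) = i" for i
    unfolding idx_def by (rule some_equality) (auto simp: axis_eq_axis)
  have "(\<integral>\<^sup>+x. (\<Prod>b\<in>Basis. ennreal (h (idx b) (x \<bullet> b))) \<partial>(lborel :: (real^'n) measure))
      = (\<Prod>b\<in>Basis. \<integral>\<^sup>+t. ennreal (h (idx b) t) \<partial>lborel)"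
    by (rule nn_integral_lborel_prod) auto
  then show ?thesis
    by (simp add: prod_Basis_vec idx inner_axis prod_ennreal nonneg)
qed

lemma std_gauss_vec_radial:
  "(std_gauss_vec :: (real^'n::finite) measure) =
     density lborel (\<lambda>x. ennreal ((1 / sqrt (2 * pi)) ^ CARD('n) * exp (- (norm x)\<^sup>2 / 2)))"
proof -
  have "(\<Prod>i\<in>UNIV. std_normal_density (x $ i)) = (1 / sqrt (2 * pi)) ^ CARD('n) * exp (- (norm x)\<^sup>2 / 2)"
    for x :: "real^'n"
  proof -
    have "(\<Prod>i\<in>UNIV. std_normal_density (x $ i)) = (\<Prod>i\<in>UNIV. 1 / sqrt (2 * pi) * exp (- (x $ i)\<^sup>2 / 2))"
      by (simp add: std_normal_density_def)
    also have "\<dots> = (1 / sqrt (2 * pi)) ^ CARD('n) * exp (\<Sum>i\<in>UNIV. - (x $ i)\<^sup>2 / 2)"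
      by (simp add: prod.distrib exp_sum del: times_divide_eq_left divide_inverse)
    also have "(\<Sum>i\<in>UNIV. - (x $ i)\<^sup>2 / 2) = - (norm x)\<^sup>2 / 2"
      by (simp add: norm_vec_def L2_set_def sum_nonneg sum_divide_distrib[symmetric] sum_negf)
    finally show ?thesis .
  qed
  then show ?thesis
    by (simp add: std_gauss_vec_def)
qed

lemma sets_std_gauss_vec [simp, measurable_cong]: "sets std_gauss_vec = sets borel"
  by (simp add: std_gauss_vec_def)

lemma nn_integral_std_normal_density_moments:
  shows "(\<integral>\<^sup>+t. ennreal (std_normal_density t) \<partial>lborel) = 1"
    and "(\<integral>\<^sup>+t. ennreal (std_normal_density t * t\<^sup>2) \<partial>lborel) = 1"
    and "(\<integral>\<^sup>+t. ennreal (std_normal_density t * \<bar>t\<bar>) \<partial>lborel) = sqrt (2 / pi)"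
  using std_normal_moment_even[of 0] std_normal_moment_even[of 1] std_normal_moment_abs_odd[of 0]
  by (subst nn_integral_eq_integral; force simp: has_bochner_integral_iff)+

lemma nn_integral_std_gauss_vec_prod:
  fixes h :: "'n::finite \<Rightarrow> real \<Rightarrow> real"
  assumes [measurable]: "\<And>i. h i \<in> borel_measurable borel" and nonneg: "\<And>i t. 0 \<le> h i t"
  shows "(\<integral>\<^sup>+x. ennreal (\<Prod>i\<in>UNIV. h i (x $ i)) \<partial>(std_gauss_vec :: (real^'n) measure))
     = (\<Prod>i\<in>UNIV. \<integral>\<^sup>+t. ennreal (std_normal_density t * h i t) \<partial>lborel)"
proof -
  have "(\<integral>\<^sup>+x. ennreal (\<Prod>i\<in>UNIV. h i (x $ i)) \<partial>(std_gauss_vec :: (real^'n) measure))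
      = (\<integral>\<^sup>+x. ennreal (\<Prod>i\<in>UNIV. std_normal_density (x $ i) * h i (x $ i)) \<partial>lborel)"
    unfolding std_gauss_vec_def
    by (subst nn_integral_density) (auto simp: prod.distrib ennreal_mult' prod_nonneg nonneg)
  also have "\<dots> = (\<Prod>i\<in>UNIV. \<integral>\<^sup>+t. ennreal (std_normal_density t * h i t) \<partial>lborel)"
    by (rule nn_integral_lborel_prod_vec) (auto simp: nonneg)
  finally show ?thesis .
qed

lemma prob_space_std_gauss_vec: "prob_space (std_gauss_vec :: (real^'n::finite) measure)"
proof
  have "(\<integral>\<^sup>+x. ennreal (\<Prod>i\<in>UNIV. (\<lambda>_ _. 1::real) i (x $ i))
      \<partial>(std_gauss_vec :: (real^'n) measure)) = 1"
    by (subst nn_integral_std_gauss_vec_prod) (auto simp: nn_integral_std_normal_density_moments)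
  then show "emeasure (std_gauss_vec :: (real^'n) measure) (space std_gauss_vec) = 1"
    by simp
qed

lemma distr_std_gauss_vec_orthogonal:
  fixes f :: "real^'n::finite \<Rightarrow> real^'n"
  assumes f: "orthogonal_transformation f"
  shows "distr std_gauss_vec borel f = std_gauss_vec"
proof -
  define \<phi> :: "real^'n \<Rightarrow> ennreal" where
    "\<phi> x = ennreal ((1 / sqrt (2 * pi)) ^ CARD('n) * exp (- (norm x)\<^sup>2 / 2))" for x
  have [measurable]: "f \<in> borel_measurable borel"
    using f by (simp add: borel_measurable_linear orthogonal_transformation_linear)
  have [measurable]: "\<phi> \<in> borel_measurable borel"
    unfolding \<phi>_def by measurable
  have \<phi>: "\<phi> (f x) = \<phi> x" for x
    by (simp add: \<phi>_def orthogonal_transformation_norm[OF f])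
  show ?thesis
  proof (rule measure_eqI)
    fix A assume "A \<in> sets (distr std_gauss_vec borel f)"
    then have [measurable]: "A \<in> sets borel" by simp
    have "f -` A \<in> sets borel"
      by (simp add: measurable_sets_borel[OF \<open>f \<in> borel_measurable borel\<close>])
    then have "emeasure (distr std_gauss_vec borel f) A = (\<integral>\<^sup>+x. \<phi> x * indicator (f -` A) x \<partial>lborel)"
      unfolding std_gauss_vec_radial \<phi>_def[symmetric] by (simp add: emeasure_distr emeasure_density)
    also have "\<dots> = (\<integral>\<^sup>+x. \<phi> (f x) * indicator A (f x) \<partial>lborel)"
      by (simp add: \<phi> indicator_def)
    also have "\<dots> = (\<integral>\<^sup>+y. \<phi> y * indicator A y \<partial>distr lborel borel f)"
      by (simp add: nn_integral_distr)
    also have "\<dots> = emeasure std_gauss_vec A"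
      unfolding std_gauss_vec_radial \<phi>_def[symmetric]
      by (simp add: lborel_distr_orthogonal[OF f] emeasure_density)
    finally show "emeasure (distr std_gauss_vec borel f) A = emeasure std_gauss_vec A" .
  qed simp
qed

lemma has_bochner_integral_std_gauss_vec_orthogonal_iff:
  fixes f :: "real^'n::finite \<Rightarrow> real^'n" and F :: "real^'n \<Rightarrow> 'b::{banach,second_countable_topology}"
  assumes f: "orthogonal_transformation f" and [measurable]: "F \<in> borel_measurable borel"
  shows "has_bochner_integral std_gauss_vec (\<lambda>x. F (f x)) c \<longleftrightarrow> has_bochner_integral std_gauss_vec F c"
proof -
  have [measurable]: "f \<in> borel_measurable borel"
    using f by (simp add: borel_measurable_linear orthogonal_transformation_linear)
  then have [measurable]: "f \<in> std_gauss_vec \<rightarrow>\<^sub>M borel"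
    by simp
  show ?thesis
    using integral_distr[of f std_gauss_vec borel F] integrable_distr_eq[of f std_gauss_vec borel F]
    by (simp add: has_bochner_integral_iff distr_std_gauss_vec_orthogonal[OF f])
qed

lemma has_bochner_integral_std_gauss_vec_prod:
  fixes h :: "'n::finite \<Rightarrow> real \<Rightarrow> real"
  assumes [measurable]: "\<And>i. h i \<in> borel_measurable borel" and "\<And>i t. 0 \<le> h i t"
    and "\<And>i. (\<integral>\<^sup>+t. ennreal (std_normal_density t * h i t) \<partial>lborel) = ennreal (c i)" and "\<And>i. 0 \<le> c i"
  shows "has_bochner_integral (std_gauss_vec :: (real^'n) measure)
    (\<lambda>x. \<Prod>i\<in>UNIV. h i (x $ i)) (\<Prod>i\<in>UNIV. c i)"
  using assms by (intro has_bochner_integral_nn_integral)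
    (auto simp: nn_integral_std_gauss_vec_prod prod_nonneg prod_ennreal)

lemma std_gauss_vec_coordinate_sq:
  "has_bochner_integral (std_gauss_vec :: (real^'n::finite) measure) (\<lambda>x. (x $ i)\<^sup>2) 1"
proof -
  have "(\<integral>\<^sup>+t. ennreal (std_normal_density t * (if l = i then t\<^sup>2 else 1)) \<partial>lborel) = 1" for l
    by (cases "l = i") (simp_all add: nn_integral_std_normal_density_moments)
  then have "has_bochner_integral (std_gauss_vec :: (real^'n) measure)
      (\<lambda>x. \<Prod>l\<in>UNIV. if l = i then (x $ l)\<^sup>2 else 1) (\<Prod>l\<in>(UNIV :: 'n set). 1)"
    by (intro has_bochner_integral_std_gauss_vec_prod[where h = "\<lambda>l t. if l = i then t\<^sup>2 else 1"])
      auto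
  then show ?thesis
    by (simp add: prod.delta)
qed

lemma std_gauss_vec_abs_coordinate_mult:
  assumes "i \<noteq> j"
  shows "has_bochner_integral (std_gauss_vec :: (real^'n::finite) measure)
    (\<lambda>x. \<bar>x $ i\<bar> * \<bar>x $ j\<bar>) (2 / pi)"
proof -
  define h where "h l t = (if l = i then \<bar>t\<bar> else 1) * (if l = j then \<bar>t\<bar> else 1)"
    for l :: 'n and t :: real
  define c where "c l = (if l = i then sqrt (2 / pi) else 1) * (if l = j then sqrt (2 / pi) else 1)"
    for l :: 'n
  have "(\<integral>\<^sup>+t. ennreal (std_normal_density t * h l t) \<partial>lborel) = ennreal (c l)" for l
    using assms by (cases "l = i"; cases "l = j")
      (simp_all add: h_def c_def nn_integral_std_normal_density_moments)
  then have "has_bochner_integral (std_gauss_vec :: (real^'n) measure)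
      (\<lambda>x. \<Prod>l\<in>UNIV. h l (x $ l)) (\<Prod>l\<in>UNIV. c l)"
    by (intro has_bochner_integral_std_gauss_vec_prod) (auto simp: h_def c_def)
  moreover have "(\<Prod>l\<in>UNIV. h l (x $ l)) = \<bar>x $ i\<bar> * \<bar>x $ j\<bar>" for x :: "real^'n"
    by (simp add: h_def prod.distrib prod.delta)
  moreover have "(\<Prod>l\<in>UNIV. c l) = 2 / pi"
    by (simp add: c_def prod.distrib prod.delta real_sqrt_mult[symmetric])
  ultimately show ?thesis
    by simp
qed

lemma std_gauss_vec_inner_unit_sq:
  fixes u :: "real^'n::finite"
  assumes "norm u = 1"
  shows "has_bochner_integral std_gauss_vec (\<lambda>x. (x \<bullet> u)\<^sup>2) 1"
proof -
  obtain i :: 'n where True by simp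
  define f where "f = householder (axis i 1 - u)"
  have f: "orthogonal_transformation f" "f u = axis i 1"
    unfolding f_def by (simp_all add: orthogonal_transformation_householder householder_swap assms)
  have "x \<bullet> u = f x $ i" for x
  proof -
    have "x \<bullet> u = f x \<bullet> f u"
      using f(1) by (simp add: orthogonal_transformation_def)
    then show ?thesis
      by (simp add: f(2) inner_axis)
  qed
  then show ?thesis
    using std_gauss_vec_coordinate_sq[of i]
      has_bochner_integral_std_gauss_vec_orthogonal_iff[OF f(1), where F = "\<lambda>y. (y $ i)\<^sup>2"]
    by simp
qed

lemma std_gauss_vec_abs_inner_orthonormal_mult:
  fixes u v :: "real^'n::finite"
  assumes "norm u = 1" "norm v = 1" "u \<bullet> v = 0"
  shows "has_bochner_integral std_gauss_vec (\<lambda>x. \<bar>x \<bullet> u\<bar> * \<bar>x \<bullet> v\<bar>) (2 / pi)"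
proof -
  obtain f :: "real^'n \<Rightarrow> real^'n" and i j :: 'n
    where f: "orthogonal_transformation f" "i \<noteq> j" "f u = axis i 1" "f v = axis j 1"
    by (rule orthonormal_pair_to_axes[OF assms])
  have "x \<bullet> u = f x \<bullet> f u" "x \<bullet> v = f x \<bullet> f v" for x
    using f(1) by (simp_all add: orthogonal_transformation_def)
  then have "x \<bullet> u = f x $ i" "x \<bullet> v = f x $ j" for x
    by (simp_all add: f(3,4) inner_axis)
  then show ?thesis
    using std_gauss_vec_abs_coordinate_mult[OF f(2)]
      has_bochner_integral_std_gauss_vec_orthogonal_iff[OF f(1), where F = "\<lambda>y. \<bar>y $ i\<bar> * \<bar>y $ j\<bar>"]
    by simp
qed

lemma std_gauss_vec_norm_sq:
  "has_bochner_integral (std_gauss_vec :: (real^'n::finite) measure) (\<lambda>x. (norm x)\<^sup>2) CARD('n)"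
proof -
  have "has_bochner_integral (std_gauss_vec :: (real^'n) measure)
      (\<lambda>x. \<Sum>i\<in>UNIV. (x $ i)\<^sup>2) (\<Sum>i\<in>(UNIV :: 'n set). 1)"
    by (intro has_bochner_integral_sum std_gauss_vec_coordinate_sq)
  then show ?thesis
    by (simp add: norm_vec_def L2_set_def sum_nonneg)
qed

lemma null_sets_std_gauss_vec_span:
  fixes B :: "(real^'n::finite) set"
  assumes "finite B" "card B < CARD('n)"
  shows "span B \<in> null_sets std_gauss_vec"
proof -
  have "dim (span B) < DIM(real^'n)"
    using dim_le_card[OF _ assms(1), of "span B"] assms(2) by simp
  then have "span B \<in> null_sets lebesgue"
    using negligible_lowdim negligible_iff_null_sets by blast
  moreover have "span B \<in> sets borel"
    by (simp add: borel_closed closed_subspace)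
  ultimately have "span B \<in> null_sets lborel"
    by (simp add: null_sets_completion_iff)
  then have "AE x in lborel. x \<in> span B \<longrightarrow> ennreal (\<Prod>i\<in>UNIV. std_normal_density (x $ i)) = 0"
    by (auto dest: AE_not_in elim: eventually_mono)
  then show ?thesis
    unfolding std_gauss_vec_def using \<open>span B \<in> sets borel\<close> by (subst null_sets_density_iff) auto
qed

section \<open>Gram--Schmidt applied to independent Gaussian vectors\<close>

lemma AE_PiM_fiberwise_null:
  fixes M :: "'a measure"
  assumes M: "prob_space M" and "i \<in> I" and A: "A \<in> sets (PiM I (\<lambda>_. M))"
    and fiber: "\<And>X. X \<in> space (PiM (I - {i}) (\<lambda>_. M)) \<Longrightarrow> AE x in M. X(i := x) \<notin> A"
  shows "AE r in PiM I (\<lambda>_. M). r \<notin> A"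
proof -
  let ?Q = "PiM (I - {i}) (\<lambda>_. M)"
  let ?upd = "\<lambda>(x, X). X(i := x)"
  interpret M: prob_space M by (rule M)
  interpret Q: prob_space ?Q by (intro prob_space_PiM M)
  interpret MQ: pair_sigma_finite M ?Q ..
  have I: "insert i (I - {i}) = I" using \<open>i \<in> I\<close> by auto
  have "distr (M \<Otimes>\<^sub>M ?Q) (PiM (insert i (I - {i})) (\<lambda>_. M)) ?upd = PiM (insert i (I - {i})) (\<lambda>_. M)"
    by (rule distr_pair_PiM_eq_PiM) (simp_all add: M)
  then have distr_upd: "distr (M \<Otimes>\<^sub>M ?Q) (PiM I (\<lambda>_. M)) ?upd = PiM I (\<lambda>_. M)"
    unfolding I .
  have "(\<lambda>z. (snd z)(i := fst z)) \<in> M \<Otimes>\<^sub>M ?Q \<rightarrow>\<^sub>M PiM I (\<lambda>_. M)"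
    by (rule measurable_fun_upd[where J = "I - {i}"]) (use I in auto)
  then have [measurable]: "?upd \<in> M \<Otimes>\<^sub>M ?Q \<rightarrow>\<^sub>M PiM I (\<lambda>_. M)"
    by (simp add: case_prod_beta')
  let ?A = "?upd -` A \<inter> space (M \<Otimes>\<^sub>M ?Q)"
  have "?A \<in> sets (M \<Otimes>\<^sub>M ?Q)" using A by measurable
  have "emeasure (PiM I (\<lambda>_. M)) A = emeasure (M \<Otimes>\<^sub>M ?Q) ?A"
    using A by (subst distr_upd[symmetric]) (simp add: emeasure_distr)
  also have "\<dots> = (\<integral>\<^sup>+X. emeasure M ((\<lambda>x. (x, X)) -` ?A) \<partial>?Q)"
    by (rule MQ.emeasure_pair_measure_alt2) fact
  also have "\<dots> = (\<integral>\<^sup>+X. 0 \<partial>?Q)"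
  proof (rule nn_integral_cong)
    fix X assume X: "X \<in> space ?Q"
    have "(\<lambda>x. (x, X)) -` ?A \<in> sets M"
      using \<open>?A \<in> sets (M \<Otimes>\<^sub>M ?Q)\<close> by (rule sets_Pair2)
    moreover have "{x \<in> space M. \<not> (X(i := x) \<notin> A)} = (\<lambda>x. (x, X)) -` ?A"
      using X by (auto simp: space_pair_measure)
    ultimately show "emeasure M ((\<lambda>x. (x, X)) -` ?A) = 0"
      using fiber[OF X] by (simp add: AE_iff_measurable)
  qed
  finally show ?thesis
    using A by (subst AE_iff_measurable[OF A]) (auto dest: sets.sets_into_space)
qed

(* gs r i and sign_comb g r are the vectors u_(i+1) and v of the statement, computed from the
   Gaussian vectors r 0, ..., r (k - 1). *)
locale gaussian_gram_schmidt =
  fixes s k :: nat and p :: "nat \<Rightarrow> real^'n::finite"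
  assumes orthonormal: "\<forall>i<s. \<forall>j<s. p i \<bullet> p j = (if i = j then 1 else 0)"
    and dim_bound: "s + k \<le> CARD('n)" and k_pos: "0 < k"
begin

definition sample :: "(nat \<Rightarrow> real^'n) measure" where
  "sample = PiM {..<k} (\<lambda>_. std_gauss_vec)"

definition gs :: "(nat \<Rightarrow> real^'n) \<Rightarrow> nat \<Rightarrow> real^'n" where
  "gs r i = gram_schmidt (map p [0..<s] @ map r [0..<k]) ! (s + i)"

lemma gram_schmidt_sample:
  "gram_schmidt (map p [0..<s] @ map r [0..<k]) = gram_schmidt_aux (map p [0..<s]) (map r [0..<k])"
  using gram_schmidt_orthonormal[OF orthonormal]
  by (simp add: gram_schmidt_def gram_schmidt_aux_append)

lemma orthonormal_or_zero_gram_schmidt_sample: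
  fixes r :: "nat \<Rightarrow> real^'n"
  defines "L \<equiv> gram_schmidt (map p [0..<s] @ map r [0..<k])"
  shows "orthonormal_or_zero L" "length L = s + k" "\<And>j. j < s \<Longrightarrow> L ! j = p j"
  unfolding L_def
  by (simp_all only: orthonormal_or_zero_gram_schmidt)
    (simp_all add: gram_schmidt_sample length_gram_schmidt_aux nth_gram_schmidt_aux_prefix)

lemma gs_orthogonal: "i < k \<Longrightarrow> j < k \<Longrightarrow> i \<noteq> j \<Longrightarrow> gs r i \<bullet> gs r j = 0"
  using orthonormal_or_zero_gram_schmidt_sample[where r = r]
  unfolding orthonormal_or_zero_def gs_def by simp

lemma gs_unit_or_zero: "i < k \<Longrightarrow> gs r i = 0 \<or> norm (gs r i) = 1"
  using orthonormal_or_zero_gram_schmidt_sample[where r = r]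
  unfolding orthonormal_or_zero_def gs_def by simp

lemma gs_orthogonal_p:
  assumes "i < k" "j < s"
  shows "gs r i \<bullet> p j = 0"
proof -
  let ?L = "gram_schmidt (map p [0..<s] @ map r [0..<k])"
  have "\<forall>a<s + k. \<forall>b<s + k. a \<noteq> b \<longrightarrow> ?L ! a \<bullet> ?L ! b = 0"
    using orthonormal_or_zero_gram_schmidt_sample(1,2)[where r = r]
    unfolding orthonormal_or_zero_def by simp
  then have "?L ! (s + i) \<bullet> ?L ! j = 0"
    using assms by simp
  then show ?thesis
    using orthonormal_or_zero_gram_schmidt_sample(3)[where r = r, OF assms(2)] by (simp add: gs_def)
qed

lemma norm_gs_le: "i < k \<Longrightarrow> norm (gs r i) \<le> 1"
  using gs_unit_or_zero[of i r] by auto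

lemma gs_householder:
  assumes "\<And>j. j < s \<Longrightarrow> a \<bullet> p j = 0" "i < k"
  shows "gs (compose {..<k} (householder a) r) i = householder a (gs r i)"
proof -
  have "map p [0..<s] @ map (compose {..<k} (householder a) r) [0..<k]
      = map (householder a) (map p [0..<s] @ map r [0..<k])"
    using assms(1) by (simp add: compose_def householder_fixes_orthogonal)
  then have "gram_schmidt (map p [0..<s] @ map (compose {..<k} (householder a) r) [0..<k])
      = map (householder a) (gram_schmidt (map p [0..<s] @ map r [0..<k]))"
    unfolding gram_schmidt_def
    by (metis gram_schmidt_aux_map_isometry[OF linear_householder inner_householder] list.map(1))
  then show ?thesis
    using assms(2) by (simp add: gs_def gram_schmidt_def length_gram_schmidt_aux)
qed

lemma measurable_gs [measurable]: "(\<lambda>r. gs r i) \<in> borel_measurable sample"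
proof -
  have "(\<lambda>r. r j) \<in> borel_measurable sample" if "j < k" for j
    using measurable_component_singleton[of j "{..<k}" "\<lambda>_. std_gauss_vec"] that
    by (simp add: sample_def measurable_cong_sets[OF refl sets_std_gauss_vec])
  then have "(\<lambda>r. gram_schmidt_aux []
        (map (\<lambda>f. f r) (map (\<lambda>j r. p j) [0..<s] @ map (\<lambda>j r. r j) [0..<k])) ! (s + i))
      \<in> borel_measurable sample"
    by (intro measurable_gram_schmidt_aux_nth[where c = 0]) auto
  then show ?thesis
    by (simp add: gs_def gram_schmidt_def comp_def)
qed

lemma prob_space_sample: "prob_space sample"
  unfolding sample_def by (intro prob_space_PiM prob_space_std_gauss_vec)

lemma measurable_compose_householder [measurable]:
  "compose {..<k} (householder a) \<in> sample \<rightarrow>\<^sub>M sample"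
  unfolding sample_def compose_def
  by (intro measurable_restrict measurable_compose[OF measurable_component_singleton])
    (simp_all add: measurable_cong_sets[OF sets_std_gauss_vec sets_std_gauss_vec])

lemma distr_sample_householder: "distr sample sample (compose {..<k} (householder a)) = sample"
proof -
  have "distr std_gauss_vec std_gauss_vec (householder a) = distr std_gauss_vec borel (householder a)"
    by (rule distr_cong) auto
  also have "\<dots> = std_gauss_vec"
    by (rule distr_std_gauss_vec_orthogonal[OF orthogonal_transformation_householder])
  finally show ?thesis
    unfolding sample_def
    by (subst distr_PiM_finite_prob_space')
      (auto simp: prob_space_std_gauss_vec measurable_cong_sets[OF sets_std_gauss_vec sets_std_gauss_vec])
qed

lemma integral_sample_householder:
  fixes F :: "(nat \<Rightarrow> real^'n) \<Rightarrow> 'b::{banach,second_countable_topology}"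
  assumes [measurable]: "F \<in> borel_measurable sample"
  shows "(\<integral>r. F (compose {..<k} (householder a) r) \<partial>sample) = integral\<^sup>L sample F"
  using integral_distr[of "compose {..<k} (householder a)" sample sample F]
  by (simp add: distr_sample_householder)

lemma gs_zero_in_span:
  assumes "i < k" "gs r i = 0"
  shows "r i \<in> span (set (gram_schmidt (map p [0..<s] @ map r [0..<i])))"
proof -
  have "[0..<k] = [0..<i] @ i # [Suc i..<k]"
    using assms(1) upt_add_eq_append[of 0 i "k - i"] by (simp add: upt_conv_Cons)
  then have "gram_schmidt (map p [0..<s] @ map r [0..<k])
      = gram_schmidt_aux (gram_schmidt (map p [0..<s] @ map r [0..<i])) (r i # map r [Suc i..<k])"
    by (simp add: gram_schmidt_def gram_schmidt_aux_append[symmetric] del: gram_schmidt_aux.simps)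
  moreover have "length (gram_schmidt (map p [0..<s] @ map r [0..<i])) = s + i"
    by (simp add: gram_schmidt_def length_gram_schmidt_aux)
  ultimately show ?thesis
    using assms(2) unfolding gs_def by (intro gram_schmidt_aux_nth_zero_in_span) simp
qed

lemma AE_gs_nonzero: "AE r in sample. \<forall>i<k. gs r i \<noteq> 0"
proof -
  have "AE r in sample. gs r i \<noteq> 0" if "i < k" for i
  proof -
    let ?A = "{r \<in> space sample. gs r i = 0}"
    have "AE x in std_gauss_vec. X(i := x) \<notin> ?A" for X
    proof -
      let ?B = "set (gram_schmidt (map p [0..<s] @ map X [0..<i]))"
      have "card ?B \<le> s + i"
        using card_length[of "gram_schmidt (map p [0..<s] @ map X [0..<i])"]
        by (simp add: gram_schmidt_def length_gram_schmidt_aux)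
      then have "span ?B \<in> null_sets std_gauss_vec"
        using that dim_bound by (intro null_sets_std_gauss_vec_span) simp_all
      moreover have "X(i := x) \<notin> ?A" if "x \<notin> span ?B" for x
        using gs_zero_in_span[of i "X(i := x)"] \<open>i < k\<close> that by auto
      ultimately show ?thesis
        by (auto intro: AE_I'[of "span ?B"])
    qed
    moreover have "?A \<in> sets sample"
      by measurable
    ultimately have "AE r in sample. r \<notin> ?A"
      using AE_PiM_fiberwise_null[OF prob_space_std_gauss_vec, of i "{..<k}" ?A, folded sample_def] that
      by simp
    with AE_space show ?thesis
      by eventually_elim auto
  qed
  then show ?thesis
    using AE_finite_allI[of "{..<k}" "\<lambda>i r. gs r i \<noteq> 0" sample] by (simp add: Ball_def)
qed

lemma perp_proj_orthogonal: "j < s \<Longrightarrow> perp_proj s p w \<bullet> p j = 0"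
proof -
  assume "j < s"
  have "(\<Sum>l<s. (w \<bullet> p l) *\<^sub>R p l) \<bullet> p j = (\<Sum>l<s. (w \<bullet> p l) * (p l \<bullet> p j))"
    by (simp add: inner_sum_left)
  also have "\<dots> = w \<bullet> p j"
    using \<open>j < s\<close> orthonormal by (subst sum.remove[of _ j]) (auto intro!: sum.neutral)
  finally show ?thesis
    by (simp add: perp_proj_def inner_diff_left)
qed

lemma inner_gs_perp_proj: "i < k \<Longrightarrow> w \<bullet> gs r i = perp_proj s p w \<bullet> gs r i"
  by (simp add: perp_proj_def inner_diff_left inner_sum_left gs_orthogonal_p inner_commute[of "p _"])

lemma norm_perp_proj_sq: "(norm (perp_proj s p x))\<^sup>2 = (norm x)\<^sup>2 - (\<Sum>j<s. (x \<bullet> p j)\<^sup>2)"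
proof -
  have "perp_proj s p x \<bullet> (\<Sum>j<s. (x \<bullet> p j) *\<^sub>R p j) = 0"
    by (simp add: inner_sum_right perp_proj_orthogonal)
  then have "(norm (perp_proj s p x))\<^sup>2 = perp_proj s p x \<bullet> x"
    by (simp add: power2_norm_eq_inner perp_proj_def[of s p x] inner_diff_right)
  also have "\<dots> = x \<bullet> x - (\<Sum>j<s. (x \<bullet> p j)\<^sup>2)"
    by (simp add: perp_proj_def inner_diff_left inner_sum_left power2_eq_square inner_commute[of "p _" x])
  finally show ?thesis
    by (simp add: power2_norm_eq_inner)
qed

definition abs_sum :: "real^'n \<Rightarrow> (nat \<Rightarrow> real^'n) \<Rightarrow> real" where
  "abs_sum w r = (\<Sum>i<k. \<bar>w \<bullet> gs r i\<bar>)"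

definition sign_comb :: "real^'n \<Rightarrow> (nat \<Rightarrow> real^'n) \<Rightarrow> real^'n" where
  "sign_comb w r = (1 / sqrt k) *\<^sub>R (\<Sum>i<k. sgn (w \<bullet> gs r i) *\<^sub>R gs r i)"

definition abs_sum_moment :: "real^'n \<Rightarrow> real" where
  "abs_sum_moment w = (\<integral>r. (abs_sum w r)\<^sup>2 \<partial>sample)"

lemma borel_measurable_abs_sum [measurable]: "abs_sum w \<in> borel_measurable sample"
  unfolding abs_sum_def by measurable

lemma borel_measurable_sign_comb [measurable]: "sign_comb w \<in> borel_measurable sample"
  unfolding sign_comb_def by measurable

lemma abs_sum_perp_proj: "abs_sum (perp_proj s p w) r = abs_sum w r"
  unfolding abs_sum_def by (simp add: inner_gs_perp_proj[symmetric])

lemma sign_comb_perp_proj: "sign_comb (perp_proj s p w) r = sign_comb w r"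
  unfolding sign_comb_def by (simp add: inner_gs_perp_proj[symmetric])

lemma inner_sign_comb: "w \<bullet> sign_comb w r = abs_sum w r / sqrt k"
  by (simp add: sign_comb_def abs_sum_def inner_sum_right abs_sgn mult.commute)

lemma sign_comb_orthogonal: "j < s \<Longrightarrow> sign_comb w r \<bullet> p j = 0"
  by (simp add: sign_comb_def inner_sum_left gs_orthogonal_p)

lemma norm_sign_comb_le: "norm (sign_comb w r) \<le> sqrt k"
proof -
  have "norm (\<Sum>i<k. sgn (w \<bullet> gs r i) *\<^sub>R gs r i) \<le> (\<Sum>i<k. 1)"
    using norm_gs_le by (intro order_trans[OF norm_sum] sum_mono) (auto simp: abs_sgn_eq mult_le_one)
  then have "norm (sign_comb w r) \<le> k / sqrt k"
    by (simp add: sign_comb_def divide_right_mono)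
  then show ?thesis
    by (simp add: real_div_sqrt)
qed

lemma abs_sum_nonneg: "0 \<le> abs_sum w r"
  by (simp add: abs_sum_def sum_nonneg)

lemma abs_sum_le: "abs_sum w r \<le> k * norm w"
proof -
  have "\<bar>w \<bullet> gs r i\<bar> \<le> norm w" if "i < k" for i
    using order_trans[OF Cauchy_Schwarz_ineq2 mult_left_le[OF norm_gs_le[OF that] norm_ge_zero]] .
  then show ?thesis
    unfolding abs_sum_def using sum_mono[of "{..<k}" "\<lambda>i. \<bar>w \<bullet> gs r i\<bar>" "\<lambda>_. norm w"] by simp
qed

lemma abs_sum_scaleR: "abs_sum (c *\<^sub>R w) r = \<bar>c\<bar> * abs_sum w r"
  by (simp add: abs_sum_def abs_mult sum_distrib_left)

lemma abs_sum_householder: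
  "(\<And>j. j < s \<Longrightarrow> a \<bullet> p j = 0) \<Longrightarrow>
     abs_sum (householder a w) (compose {..<k} (householder a) r) = abs_sum w r"
  unfolding abs_sum_def by (intro sum.cong) (auto simp: gs_householder)

lemma sign_comb_householder:
  assumes "\<And>j. j < s \<Longrightarrow> a \<bullet> p j = 0"
  shows "sign_comb w (compose {..<k} (householder a) r) = householder a (sign_comb (householder a w) r)"
proof -
  have "sign_comb w (compose {..<k} (householder a) r)
      = (1 / sqrt k) *\<^sub>R (\<Sum>i<k. sgn (householder a w \<bullet> gs r i) *\<^sub>R householder a (gs r i))"
    unfolding sign_comb_def
    by (intro arg_cong[where f = "\<lambda>x. _ *\<^sub>R x"] sum.cong)
      (auto simp: gs_householder[OF assms] householder_adjoint inner_commute)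
  then show ?thesis
    by (simp add: sign_comb_def linear_scale[OF linear_householder] linear_sum[OF linear_householder])
qed

lemma abs_sum_moment_scaleR: "abs_sum_moment (c *\<^sub>R w) = c\<^sup>2 * abs_sum_moment w"
  by (simp add: abs_sum_moment_def abs_sum_scaleR power_mult_distrib)

lemma abs_sum_moment_householder:
  assumes "\<And>j. j < s \<Longrightarrow> a \<bullet> p j = 0"
  shows "abs_sum_moment (householder a w) = abs_sum_moment w"
proof -
  have "abs_sum_moment (householder a w)
      = (\<integral>r. (abs_sum (householder a w) (compose {..<k} (householder a) r))\<^sup>2 \<partial>sample)"
    unfolding abs_sum_moment_def by (rule integral_sample_householder[symmetric]) simp
  then show ?thesis
    by (simp add: abs_sum_householder[OF assms] abs_sum_moment_def)
qed

lemma abs_sum_moment_radial: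
  assumes "\<And>j. j < s \<Longrightarrow> w \<bullet> p j = 0" "\<And>j. j < s \<Longrightarrow> w0 \<bullet> p j = 0" "w0 \<noteq> 0"
  shows "abs_sum_moment w = (norm w / norm w0)\<^sup>2 * abs_sum_moment w0"
proof -
  define c where "c = norm w / norm w0"
  define w1 where "w1 = (1 / c) *\<^sub>R w"
  show ?thesis
  proof (cases "w = 0")
    case True
    then show ?thesis using abs_sum_moment_scaleR[of 0 w] by simp
  next
    case False
    then have "c > 0" "w = c *\<^sub>R w1" "norm w1 = norm w0"
      using assms(3) by (simp_all add: c_def w1_def)
    moreover have "(w1 - w0) \<bullet> p j = 0" if "j < s" for j
      using assms(1,2)[OF that] by (simp add: w1_def inner_diff_left)
    ultimately have "abs_sum_moment w1 = abs_sum_moment w0"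
      using abs_sum_moment_householder[of "w1 - w0" w0] householder_swap[of w1 w0] by simp
    then show ?thesis
      using \<open>w = c *\<^sub>R w1\<close> abs_sum_moment_scaleR[of c w1] by (simp add: c_def)
  qed
qed

lemma has_bochner_integral_abs_sum_sq:
  assumes nonzero: "\<forall>i<k. gs r i \<noteq> 0"
  shows "has_bochner_integral std_gauss_vec (\<lambda>x. (abs_sum x r)\<^sup>2) (k * (1 + (real k - 1) * (2 / pi)))"
proof -
  have unit: "norm (gs r i) = 1" if "i < k" for i
    using gs_unit_or_zero[OF that, of r] nonzero that by auto
  have "has_bochner_integral std_gauss_vec (\<lambda>x. \<Sum>i<k. \<Sum>j<k. \<bar>x \<bullet> gs r i\<bar> * \<bar>x \<bullet> gs r j\<bar>)
      (\<Sum>i<k. \<Sum>j<k. if i = j then 1 else 2 / pi)"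
  proof (intro has_bochner_integral_sum)
    fix i j assume "i \<in> {..<k}" "j \<in> {..<k}"
    then show "has_bochner_integral std_gauss_vec (\<lambda>x. \<bar>x \<bullet> gs r i\<bar> * \<bar>x \<bullet> gs r j\<bar>)
        (if i = j then 1 else 2 / pi)"
      using std_gauss_vec_inner_unit_sq[OF unit[of i]]
        std_gauss_vec_abs_inner_orthonormal_mult[OF unit[of i] unit[of j] gs_orthogonal[of i j r]]
      by (auto simp: abs_mult_self_eq power2_eq_square)
  qed
  moreover have "(\<Sum>j<k. if i = j then 1 else c) = 1 + (real k - 1) * c" if "i < k" for i and c :: real
  proof -
    have "(\<Sum>j<k. if i = j then 1 else c) = (\<Sum>j<k. c + (if i = j then 1 - c else 0))"
      by (intro sum.cong) auto
    then show ?thesis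
      using that by (simp add: sum.distrib algebra_simps)
  qed
  ultimately show ?thesis
    by (simp add: abs_sum_def power2_eq_square sum_product)
qed

lemma has_bochner_integral_norm_perp_proj_sq:
  "has_bochner_integral std_gauss_vec (\<lambda>x. (norm (perp_proj s p x))\<^sup>2) (CARD('n) - s)"
proof -
  have "norm (p j) = 1" if "j < s" for j
    using orthonormal that by (simp add: norm_eq_sqrt_inner)
  then have "has_bochner_integral std_gauss_vec (\<lambda>x. (norm x)\<^sup>2 - (\<Sum>j<s. (x \<bullet> p j)\<^sup>2))
      (real CARD('n) - (\<Sum>j<s. 1))"
    by (intro has_bochner_integral_diff has_bochner_integral_sum std_gauss_vec_norm_sq
        std_gauss_vec_inner_unit_sq) simp
  then show ?thesis
    using dim_bound by (simp add: norm_perp_proj_sq of_nat_diff)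
qed

lemma integrable_abs_sum_sq_pair:
  "integrable (sample \<Otimes>\<^sub>M std_gauss_vec) (\<lambda>(r, x). (abs_sum x r)\<^sup>2)"
proof -
  interpret sample: prob_space sample by (rule prob_space_sample)
  interpret gauss: prob_space "std_gauss_vec :: (real^'n) measure" by (rule prob_space_std_gauss_vec)
  interpret pair_sigma_finite sample "std_gauss_vec :: (real^'n) measure" ..
  have [measurable]: "(\<lambda>z. gs (fst z) i) \<in> borel_measurable (sample \<Otimes>\<^sub>M std_gauss_vec)" for i
    by (rule measurable_compose[OF measurable_fst measurable_gs])
  have [measurable]: "(\<lambda>z. abs_sum (snd z) (fst z)) \<in> borel_measurable (sample \<Otimes>\<^sub>M std_gauss_vec)"
    unfolding abs_sum_def by measurable
  have [measurable]: "(\<lambda>x. (abs_sum x r)\<^sup>2) \<in> borel_measurable std_gauss_vec" for r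
    unfolding abs_sum_def by measurable
  have bound: "(abs_sum x r)\<^sup>2 \<le> (real k)\<^sup>2 * (norm x)\<^sup>2" for x r
  proof -
    have "(abs_sum x r)\<^sup>2 \<le> (k * norm x)\<^sup>2"
      by (intro power_mono abs_sum_le abs_sum_nonneg)
    then show ?thesis
      by (simp add: power_mult_distrib)
  qed
  have norm_int: "integrable std_gauss_vec (\<lambda>x::real^'n. (real k)\<^sup>2 * (norm x)\<^sup>2)"
    using std_gauss_vec_norm_sq[where 'n = 'n]
    by (intro integrable_mult_right) (simp add: has_bochner_integral_iff)
  have int_r: "integrable std_gauss_vec (\<lambda>x. (abs_sum x r)\<^sup>2)" for r
    by (rule Bochner_Integration.integrable_bound[OF norm_int]) (auto intro!: AE_I2 bound)
  have "(\<integral>x. (abs_sum x r)\<^sup>2 \<partial>std_gauss_vec)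
      \<le> (\<integral>x. (real k)\<^sup>2 * (norm x)\<^sup>2 \<partial>(std_gauss_vec :: (real^'n) measure))" for r
    by (intro integral_mono int_r norm_int bound)
  also have "(\<integral>x. (real k)\<^sup>2 * (norm x)\<^sup>2 \<partial>(std_gauss_vec :: (real^'n) measure)) = (real k)\<^sup>2 * CARD('n)"
    using std_gauss_vec_norm_sq[where 'n = 'n] by (simp add: has_bochner_integral_iff)
  finally have "AE r in sample.
      norm (\<integral>x. norm ((abs_sum x r)\<^sup>2) \<partial>std_gauss_vec) \<le> (real k)\<^sup>2 * CARD('n)"
    by simp
  then have "integrable sample (\<lambda>r. \<integral>x. norm ((abs_sum x r)\<^sup>2) \<partial>std_gauss_vec)"
    by (intro sample.integrable_const_bound) measurable
  then show ?thesis
    by (intro Fubini_integrable) (simp_all add: int_r)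
qed

lemma integral_integral_abs_sum_sq:
  "(\<integral>r. (\<integral>x. (abs_sum x r)\<^sup>2 \<partial>std_gauss_vec) \<partial>sample) = k * (1 + (real k - 1) * (2 / pi))"
proof -
  interpret sample: prob_space sample by (rule prob_space_sample)
  interpret gauss: prob_space "std_gauss_vec :: (real^'n) measure" by (rule prob_space_std_gauss_vec)
  interpret pair_sigma_finite sample "std_gauss_vec :: (real^'n) measure" ..
  have "AE r in sample. (\<integral>x. (abs_sum x r)\<^sup>2 \<partial>std_gauss_vec) = k * (1 + (real k - 1) * (2 / pi))"
    using AE_gs_nonzero
    by eventually_elim (use has_bochner_integral_abs_sum_sq in \<open>simp add: has_bochner_integral_iff\<close>)
  moreover have "integrable sample (\<lambda>r. \<integral>x. (abs_sum x r)\<^sup>2 \<partial>std_gauss_vec)"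
    using integrable_fst'[OF integrable_abs_sum_sq_pair] by simp
  ultimately show ?thesis
    by (subst integral_cong_AE[where g = "\<lambda>_. k * (1 + (real k - 1) * (2 / pi))"])
      (simp_all add: sample.prob_space)
qed

lemma abs_sum_moment_eq:
  assumes "\<And>j. j < s \<Longrightarrow> w \<bullet> p j = 0"
  shows "abs_sum_moment w = (norm w)\<^sup>2 * (k * (1 + (real k - 1) * (2 / pi))) / (CARD('n) - s)"
proof (cases "w = 0")
  case True
  then show ?thesis using abs_sum_moment_scaleR[of 0 w] by simp
next
  case False
  interpret sample: prob_space sample by (rule prob_space_sample)
  interpret gauss: prob_space "std_gauss_vec :: (real^'n) measure" by (rule prob_space_std_gauss_vec)
  interpret pair_sigma_finite sample "std_gauss_vec :: (real^'n) measure" ..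
  define c where "c = abs_sum_moment w / (norm w)\<^sup>2"
  have "(\<integral>r. (abs_sum x r)\<^sup>2 \<partial>sample) = c * (norm (perp_proj s p x))\<^sup>2" for x
  proof -
    have "(\<integral>r. (abs_sum x r)\<^sup>2 \<partial>sample) = abs_sum_moment (perp_proj s p x)"
      by (simp only: abs_sum_moment_def abs_sum_perp_proj)
    also have "\<dots> = (norm (perp_proj s p x) / norm w)\<^sup>2 * abs_sum_moment w"
      by (rule abs_sum_moment_radial[OF perp_proj_orthogonal assms False])
    finally show ?thesis
      by (simp add: c_def power_divide)
  qed
  then have "(\<integral>x. (\<integral>r. (abs_sum x r)\<^sup>2 \<partial>sample) \<partial>std_gauss_vec) = c * (CARD('n) - s)"
    using has_bochner_integral_mult_right[OF has_bochner_integral_norm_perp_proj_sq, of c]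
    by (simp add: has_bochner_integral_iff)
  moreover have "(\<integral>x. (\<integral>r. (abs_sum x r)\<^sup>2 \<partial>sample) \<partial>std_gauss_vec)
      = (\<integral>r. (\<integral>x. (abs_sum x r)\<^sup>2 \<partial>std_gauss_vec) \<partial>sample)"
    using Fubini_integral[OF integrable_abs_sum_sq_pair] by simp
  ultimately have "abs_sum_moment w / (norm w)\<^sup>2 * (CARD('n) - s) = k * (1 + (real k - 1) * (2 / pi))"
    by (simp add: c_def integral_integral_abs_sum_sq)
  then show ?thesis
    using dim_bound k_pos False by (simp add: field_simps)
qed

definition sign_proj :: "real^'n \<Rightarrow> (nat \<Rightarrow> real^'n) \<Rightarrow> real^'n" where
  "sign_proj w r = (w \<bullet> sign_comb w r) *\<^sub>R sign_comb w r"

lemma borel_measurable_sign_proj [measurable]: "sign_proj w \<in> borel_measurable sample"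
  unfolding sign_proj_def by measurable

lemma integrable_sign_proj: "integrable sample (sign_proj w)"
proof -
  interpret prob_space sample by (rule prob_space_sample)
  have "norm (sign_proj w r) \<le> norm w * k" for r
  proof -
    have "norm (sign_proj w r) = \<bar>w \<bullet> sign_comb w r\<bar> * norm (sign_comb w r)"
      by (simp add: sign_proj_def)
    also have "\<dots> \<le> norm w * norm (sign_comb w r) * norm (sign_comb w r)"
      by (intro mult_right_mono Cauchy_Schwarz_ineq2) simp
    also have "\<dots> = norm w * (norm (sign_comb w r))\<^sup>2"
      by (simp add: power2_eq_square)
    also have "\<dots> \<le> norm w * (sqrt k)\<^sup>2"
      by (intro mult_left_mono power_mono norm_sign_comb_le) simp_all
    finally show ?thesis
      by simp
  qed
  then show ?thesis
    by (intro integrable_const_bound[where B = "norm w * k"]) simp_all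
qed

lemma sign_proj_householder:
  assumes "\<And>j. j < s \<Longrightarrow> a \<bullet> p j = 0"
  shows "sign_proj w (compose {..<k} (householder a) r) = householder a (sign_proj (householder a w) r)"
  by (simp add: sign_proj_def sign_comb_householder[OF assms] linear_scale[OF linear_householder]
      householder_adjoint[symmetric])

lemma integral_sign_proj_orthogonal:
  assumes "\<And>j. j < s \<Longrightarrow> a \<bullet> p j = 0" "a \<bullet> w = 0"
  shows "a \<bullet> integral\<^sup>L sample (sign_proj w) = 0"
proof -
  let ?y = "integral\<^sup>L sample (sign_proj w)"
  have "?y = (\<integral>r. sign_proj w (compose {..<k} (householder a) r) \<partial>sample)"
    by (rule integral_sample_householder[symmetric]) simp
  also have "\<dots> = (\<integral>r. householder a (sign_proj w r) \<partial>sample)"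
    by (simp add: sign_proj_householder[OF assms(1)] householder_fixes_orthogonal[OF assms(2)])
  also have "\<dots> = householder a ?y"
    by (intro integral_bounded_linear integrable_sign_proj)
      (simp add: linear_conv_bounded_linear[symmetric] linear_householder)
  finally have "(2 * (a \<bullet> ?y) / (a \<bullet> a)) *\<^sub>R a = 0"
    by (simp add: householder_def[of a ?y] algebra_simps)
  then show ?thesis
    by (cases "a = 0") auto
qed

lemma integral_sign_proj_inner_p:
  assumes "j < s"
  shows "integral\<^sup>L sample (sign_proj w) \<bullet> p j = 0"
proof -
  have "integral\<^sup>L sample (sign_proj w) \<bullet> p j = (\<integral>r. sign_proj w r \<bullet> p j \<partial>sample)"
    using integrable_sign_proj[of w] by simp
  also have "\<dots> = 0"
    using assms by (simp add: sign_proj_def sign_comb_orthogonal)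
  finally show ?thesis .
qed

lemma integral_sign_proj_inner_perp_proj:
  "integral\<^sup>L sample (sign_proj w) \<bullet> perp_proj s p w = abs_sum_moment (perp_proj s p w) / k"
proof -
  have "sign_proj w r \<bullet> perp_proj s p w = (abs_sum (perp_proj s p w) r)\<^sup>2 / k" for r
  proof -
    have "perp_proj s p w \<bullet> sign_comb w r = abs_sum (perp_proj s p w) r / sqrt k"
      using inner_sign_comb[of "perp_proj s p w" r] by (simp add: sign_comb_perp_proj)
    moreover have "w \<bullet> sign_comb w r = perp_proj s p w \<bullet> sign_comb w r"
      using inner_sign_comb[of w r] inner_sign_comb[of "perp_proj s p w" r]
      by (simp add: sign_comb_perp_proj abs_sum_perp_proj)
    ultimately show ?thesis
      using k_pos by (simp add: sign_proj_def inner_commute power2_eq_square)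
  qed
  moreover have "integral\<^sup>L sample (sign_proj w) \<bullet> perp_proj s p w =
      (\<integral>r. sign_proj w r \<bullet> perp_proj s p w \<partial>sample)"
    using integrable_sign_proj[of w] by simp
  ultimately show ?thesis
    by (simp add: abs_sum_moment_def)
qed

lemma has_bochner_integral_sign_proj:
  assumes "perp_proj s p w \<noteq> 0"
  shows "has_bochner_integral sample (sign_proj w)
    (((1 + (real k - 1) * (2 / pi)) / (CARD('n) - s)) *\<^sub>R perp_proj s p w)"
proof -
  let ?y = "integral\<^sup>L sample (sign_proj w)" and ?w0 = "perp_proj s p w"
  define t where "t = (?y \<bullet> ?w0) / (?w0 \<bullet> ?w0)"
  define z where "z = ?y - t *\<^sub>R ?w0"
  have zp: "z \<bullet> p j = 0" if "j < s" for j
    using that by (simp add: z_def inner_diff_left integral_sign_proj_inner_p perp_proj_orthogonal)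
  have zw0: "z \<bullet> ?w0 = 0"
    using assms by (simp add: z_def t_def inner_diff_left)
  then have "z \<bullet> w = 0"
    using zp by (simp add: perp_proj_def inner_diff_right inner_sum_right)
  then have "z \<bullet> ?y = 0"
    using integral_sign_proj_orthogonal[OF zp] by blast
  then have "z \<bullet> z = 0"
    using zw0 by (simp add: z_def inner_diff_right)
  then have y: "?y = t *\<^sub>R ?w0"
    by (simp add: z_def)
  have "t = abs_sum_moment ?w0 / k / (?w0 \<bullet> ?w0)"
    by (simp add: t_def integral_sign_proj_inner_perp_proj)
  also have "\<dots> = (1 + (real k - 1) * (2 / pi)) / (CARD('n) - s)"
    using assms k_pos by (simp add: abs_sum_moment_eq[OF perp_proj_orthogonal] power2_norm_eq_inner)
  finally show ?thesis
    using y integrable_sign_proj[of w] by (simp add: has_bochner_integral_iff)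
qed

lemma has_bochner_integral_estimator:
  assumes "perp_proj s p w \<noteq> 0"
  shows "has_bochner_integral sample
    (\<lambda>r. (real (CARD('n) - s) / ((2 / pi) * (real k - 1) + 1)) *\<^sub>R sign_proj w r
      + (\<Sum>i<s. (w \<bullet> p i) *\<^sub>R p i)) w"
proof -
  define c where "c = real (CARD('n) - s) / ((2 / pi) * (real k - 1) + 1)"
  define t where "t = (1 + (real k - 1) * (2 / pi)) / (CARD('n) - s)"
  let ?p_part = "\<Sum>i<s. (w \<bullet> p i) *\<^sub>R p i"
  have "0 \<le> (2 / pi) * (real k - 1)"
    using k_pos by simp
  then have "(2 / pi) * (real k - 1) + 1 \<noteq> 0"
    by linarith
  moreover have "real (CARD('n) - s) \<noteq> 0"
    using k_pos dim_bound by simp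
  ultimately have "c * t = 1"
    by (simp add: c_def t_def mult.commute)
  then have "c *\<^sub>R t *\<^sub>R perp_proj s p w + ?p_part = w"
    by (simp add: perp_proj_def)
  moreover have "has_bochner_integral sample (\<lambda>r. c *\<^sub>R sign_proj w r + ?p_part)
      (c *\<^sub>R t *\<^sub>R perp_proj s p w + ?p_part)"
  proof (intro has_bochner_integral_add has_bochner_integral_scaleR_right)
    interpret prob_space sample by (rule prob_space_sample)
    show "has_bochner_integral sample (\<lambda>r. ?p_part) ?p_part"
      by (simp add: has_bochner_integral_iff prob_space)
  qed (use has_bochner_integral_sign_proj[OF assms] in \<open>simp add: t_def\<close>)
  ultimately show ?thesis
    by (simp add: c_def)
qed

end

theorem mainTheorem4:
  fixes s q :: nat and p :: "nat \<Rightarrow> real ^ 'n::finite" and g :: "real ^ 'n"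
  assumes "CARD('n) \<ge> 2"
    and "1 \<le> s" and "s < q" and "q \<le> CARD('n)"
    and "\<forall>i<s. \<forall>j<s. p i \<bullet> p j = (if i = j then 1 else 0)"
    and "perp_proj s p g \<noteq> 0"
  shows "has_bochner_integral (PiM {..<q - s} (\<lambda>_. std_gauss_vec))
     (\<lambda>r. let us = gram_schmidt (map p [0..<s] @ map r [0..<q - s]);
              u = (\<lambda>i. us ! (s + i));
              v = (1 / sqrt (real (q - s))) *\<^sub>R (\<Sum>i<q - s. sgn (g \<bullet> u i) *\<^sub>R u i)
          in (real (CARD('n) - s) / ((2 / pi) * (real (q - s) - 1) + 1)) *\<^sub>R ((g \<bullet> v) *\<^sub>R v)
             + (\<Sum>i<s. (g \<bullet> p i) *\<^sub>R p i))
     g"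
proof -
  define k where "k = q - s"
  interpret gaussian_gram_schmidt s k p
    using assms by unfold_locales (auto simp: k_def)
  from has_bochner_integral_estimator[OF assms(6)] show ?thesis
    unfolding sample_def sign_proj_def sign_comb_def gs_def unfolding k_def Let_def .
qed

end
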